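(* Let $a,c,p\in\mathbb{C}$ with $-c\notin\mathbb{N}\cup\{0\}$ and $c\neq2$. Write $\sin(pz)M(a,c;z)=\sum_{n=0}^\infty u_nz^n$, $z\in\mathbb{C}$. Then $u_0=0$, $u_1=p$, $u_2=\frac{ap}{c}$, $u_3=\frac{a(a+1)p}{2c(c+1)}-\frac{p^3}{6}$, $u_4=\frac{a(a+1)(a+2)p}{6c(c+1)(c+2)}-\frac{ap^3}{6c}$, $u_5=-\frac{a(a+1)p^3}{12c(c+1)}+\frac{a(a+1)(a+2)(a+3)p}{24c(c+1)(c+2)(c+3)}+\frac{p^5}{120}$, and for all integers $n\ge5$, \[ u_{n+1}=\sum_{i=0}^5\beta_i(n)u_{n-i}, \] where, with $D(n)=(c-2)c\,n(n+1)(c+n-1)(c+n)$, \[ \beta_0(n)=\frac{2\left(a\left(c^2-2cn+c-2(n-2)^2\right)+c(n-1)(2c+n-5)\right)}{(c-2)c(n+1)(c+n)}, \] \[ \beta_1(n)=\frac{1}{D(n)}\Big[-(n-4)(n-3)(n-2)(n-1)(4p^2+1)+2(n-3)(n-2)(n-1)\big(4a-c(4p^2+3)\big) +(n-2)(n-1)\big(8a^2+a(4c+6)-6c((c-2)p^2+c)+c\big) +2(n-1)\big(a^2(4c-2)-3a(c-1)c+c(-c^2+c+2)p^2\big) -(c-2)\big(a^2(c+2)-ac+c^2(c+1)p^2\big)\Big], \] \[ \beta_2(n)=\frac{1}{D(n)}\Big[-2p^2(c-3)\big(a(3c+8)-2c^2+c-32\big)+2p^2\big(n(-10a+c(3c-31)+104)+6(c-6)n^2+4n^3\big)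 -2(a+n-3)\big(2a^2-a(c-2n+3)-(n-2)(2c+n-4)\big)\Big], \] \[ \beta_3(n)=-\frac{1}{D(n)}\Big[p^2\big(12a^2-2a(6c+5)+c(6c-1)\big)+2(n-3)\big(a+c(4p^2+3)p^2\big) +(a-1)a+5(c-2)cp^4+(n-4)(n-3)(8p^4+6p^2+1)\Big], \] \[ \beta_4(n)=\frac{2p^2\left(p^2(-6a+5c+4(n-4))-3a+2c+n-4\right)}{D(n)},\qquad \beta_5(n)=-\frac{p^2(4p^4+5p^2+1)}{D(n)}. \]
   Context: For $a\in\mathbb{C}$, $(a)_n=a(a+1)\cdots(a+n-1)$ denotes the Pochhammer symbol, with $(a)_0=1$. For $a,c\in\mathbb{C}$ with $-c\notin\mathbb{N}\cup\{0\}$, the confluent hypergeometric (Kummer) function is $M(a,c;z)=\sum_{n=0}^\infty \frac{(a)_n}{(c)_n\,n!}z^n$, $z\in\mathbb{C}$. *)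

theory Defs
  imports Complex_Main
begin

definition kummerM :: "complex \<Rightarrow> complex \<Rightarrow> complex \<Rightarrow> complex" where
  "kummerM a c z = (\<Sum>n. pochhammer a n / (pochhammer c n * fact n) * z ^ n)"

definition DD :: "complex \<Rightarrow> nat \<Rightarrow> complex" where
  "DD c n = (let N = of_nat n in (c - 2) * c * N * (N + 1) * (c + N - 1) * (c + N))"

definition beta0 :: "complex \<Rightarrow> complex \<Rightarrow> complex \<Rightarrow> nat \<Rightarrow> complex" where
  "beta0 a c p n = (let N = of_nat n in
     2 * (a * (c^2 - 2*c*N + c - 2*(N-2)^2) + c*(N-1)*(2*c + N - 5))
     / ((c - 2) * c * (N + 1) * (c + N)))"

definition beta1 :: "complex \<Rightarrow> complex \<Rightarrow> complex \<Rightarrow> nat \<Rightarrow> complex" where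
  "beta1 a c p n = (let N = of_nat n in
     (- (N-4)*(N-3)*(N-2)*(N-1)*(4*p^2 + 1)
      + 2*(N-3)*(N-2)*(N-1)*(4*a - c*(4*p^2 + 3))
      + (N-2)*(N-1)*(8*a^2 + a*(4*c + 6) - 6*c*((c-2)*p^2 + c) + c)
      + 2*(N-1)*(a^2*(4*c - 2) - 3*a*(c-1)*c + c*(- (c^2) + c + 2)*p^2)
      - (c-2)*(a^2*(c+2) - a*c + c^2*(c+1)*p^2)) / DD c n)"

definition beta2 :: "complex \<Rightarrow> complex \<Rightarrow> complex \<Rightarrow> nat \<Rightarrow> complex" where
  "beta2 a c p n = (let N = of_nat n in
     (- 2*p^2*(c-3)*(a*(3*c + 8) - 2*c^2 + c - 32)
      + 2*p^2*(N*(-10*a + c*(3*c - 31) + 104) + 6*(c-6)*N^2 + 4*N^3)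
      - 2*(a + N - 3)*(2*a^2 - a*(c - 2*N + 3) - (N-2)*(2*c + N - 4))) / DD c n)"

definition beta3 :: "complex \<Rightarrow> complex \<Rightarrow> complex \<Rightarrow> nat \<Rightarrow> complex" where
  "beta3 a c p n = (let N = of_nat n in
     - (p^2*(12*a^2 - 2*a*(6*c + 5) + c*(6*c - 1))
        + 2*(N-3)*(a + c*(4*p^2 + 3)*p^2)
        + (a-1)*a + 5*(c-2)*c*p^4
        + (N-4)*(N-3)*(8*p^4 + 6*p^2 + 1)) / DD c n)"

definition beta4 :: "complex \<Rightarrow> complex \<Rightarrow> complex \<Rightarrow> nat \<Rightarrow> complex" where
  "beta4 a c p n = (let N = of_nat n in
     2*p^2*(p^2*(-6*a + 5*c + 4*(N-4)) - 3*a + 2*c + N - 4) / DD c n)"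

definition beta5 :: "complex \<Rightarrow> complex \<Rightarrow> complex \<Rightarrow> nat \<Rightarrow> complex" where
  "beta5 a c p n = - (p^2*(4*p^4 + 5*p^2 + 1)) / DD c n"

end

theory Submission
  imports Defs "HOL-Analysis.FPS_Convergence"
begin

(*
  Write sin (p z) = (e^(i p z) - e^(-i p z)) / (2 i).  For every q, F = e^(q z) M(a,c;z) solves
  z F'' + (c - (1 + 2q) z) F' + ((q + q^2) z - (a + c q)) F = 0, so its Taylor coefficients obey
  a three-term recurrence whose coefficients depend on q.  A combination of five consecutive
  instances of it, with multipliers polynomial in q, depends on q only through q^2.  Both
  exponents q = i p and q = -i p have q^2 = -p^2, so the resulting six-term recurrence holds for
  the coefficients of both products and, by linearity, for u.  The initial values are read off
  the Cauchy product.
*)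

unbundle no vec_syntax
unbundle fps_syntax

definition kummer_fps :: "complex \<Rightarrow> complex \<Rightarrow> complex fps" where
  "kummer_fps a c = Abs_fps (\<lambda>n. pochhammer a n / (pochhammer c n * fact n))"

(* No condition on c is needed: if pochhammer c (Suc n) = 0, both sides are 0 by x / 0 = 0. *)
lemma kummer_fps_nth_Suc:
  "kummer_fps a c $ Suc n = (a + of_nat n) / ((of_nat n + 1) * (of_nat n + c)) * kummer_fps a c $ n"
  by (simp add: kummer_fps_def pochhammer_Suc fact_Suc divide_inverse mult_ac add_ac)

lemma kummer_ratio_tendsto_0:
  fixes a c z :: complex
  shows "(\<lambda>n. (a + of_nat n) * z / ((of_nat n + 1) * (of_nat n + c))) \<longlonglongrightarrow> 0"
proof -
  have inf: "filterlim (\<lambda>n. of_nat n + w :: complex) at_infinity sequentially" for w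
    by (rule tendsto_add_filterlim_at_infinity'[OF tendsto_of_nat tendsto_const])
  have "(\<lambda>n. (1 + (a - 1) / (of_nat n + 1)) * (z / (of_nat n + c))) \<longlonglongrightarrow> (1 + 0) * 0"
    by (intro tendsto_intros tendsto_divide_0[OF tendsto_const inf])
  moreover have "(1 + (a - 1) / (of_nat n + 1)) * (z / (of_nat n + c))
      = (a + of_nat n) * z / ((of_nat n + 1) * (of_nat n + c))" for n
  proof -
    have "(of_nat n + 1 :: complex) \<noteq> 0" by (metis of_nat_Suc of_nat_neq_0 add.commute)
    then show ?thesis by (simp add: field_simps)
  qed
  ultimately show ?thesis by simp
qed

lemma summable_kummer_fps: "summable (\<lambda>n. kummer_fps a c $ n * z ^ n)"
proof -
  define r where "r n = (a + of_nat n) * z / ((of_nat n + 1) * (of_nat n + c))" for n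
  have step: "kummer_fps a c $ Suc n * z ^ Suc n = r n * (kummer_fps a c $ n * z ^ n)" for n
    by (simp add: kummer_fps_nth_Suc r_def)
  obtain N where N: "\<And>n. n \<ge> N \<Longrightarrow> norm (r n) < 1/2"
    using kummer_ratio_tendsto_0[of a z c, unfolded LIMSEQ_iff, rule_format, of "1/2"]
    unfolding r_def by auto
  show ?thesis
  proof (rule summable_ratio_test[of "1/2" N])
    fix n assume "n \<ge> N"
    show "norm (kummer_fps a c $ Suc n * z ^ Suc n) \<le> 1/2 * norm (kummer_fps a c $ n * z ^ n)"
      unfolding step norm_mult[of "r n"] using N[OF \<open>n \<ge> N\<close>] by (intro mult_right_mono) auto
  qed simp
qed

lemma fps_conv_radius_kummer_fps [simp]: "fps_conv_radius (kummer_fps a c) = \<infinity>"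
  unfolding fps_conv_radius_def by (rule conv_radius_inftyI'' summable_kummer_fps)+

lemma eval_fps_kummer_fps [simp]: "eval_fps (kummer_fps a c) z = kummerM a c z"
  by (simp add: eval_fps_def kummerM_def kummer_fps_def)

lemma Abs_fps_eq_if_sums_eval_fps:
  fixes f :: "complex fps"
  assumes "fps_conv_radius f > 0" and "\<And>z. (\<lambda>n. u n * z ^ n) sums eval_fps f z"
  shows "Abs_fps u = f"
proof (rule eval_fps_eqD)
  have "fps_conv_radius (Abs_fps u) = \<infinity>"
    unfolding fps_conv_radius_def using assms(2) by (intro conv_radius_inftyI'') (auto simp: sums_iff)
  then show "fps_conv_radius (Abs_fps u) > 0" by simp
  show "\<forall>\<^sub>F z in nhds 0. eval_fps (Abs_fps u) z = eval_fps f z"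
    using assms(2) by (simp add: eval_fps_def sums_iff)
qed fact

definition kummer_op :: "'a \<Rightarrow> 'a \<Rightarrow> 'a \<Rightarrow> 'a \<Rightarrow> 'a :: comm_ring_1 fps \<Rightarrow> 'a fps" where
  "kummer_op c b e d F = fps_X * fps_deriv (fps_deriv F) + (fps_const c - fps_const b * fps_X) * fps_deriv F
     + (fps_const e * fps_X - fps_const d) * F"

lemma kummer_op_nth_0: "kummer_op c b e d F $ 0 = c * F $ 1 - d * F $ 0"
  by (simp add: kummer_op_def)

lemma kummer_op_nth_Suc:
  "kummer_op c b e d F $ Suc m = (of_nat m + 2) * (of_nat m + 1 + c) * F $ (m + 2)
     - (b * (of_nat m + 1) + d) * F $ (m + 1) + e * F $ m"
  by (simp add: kummer_op_def ring_distribs mult.assoc)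

lemma kummer_op_fps_exp_mult:
  fixes q :: "'a :: field_char_0"
  shows "kummer_op c (b + 2 * q) (e + q * b + q^2) (d + q * c) (fps_exp q * G)
    = fps_exp q * kummer_op c b e d G"
  by (simp only: kummer_op_def fps_deriv_mult fps_deriv_add fps_deriv_mult_const_left fps_exp_deriv
      fps_deriv_const fps_const_add[symmetric] fps_const_mult[symmetric] fps_const_power[symmetric]
      numeral_fps_const[symmetric])
    algebra

lemma kummer_op_kummer_fps:
  assumes "\<forall>k::nat. c \<noteq> - of_nat k"
  shows "kummer_op c 1 0 a (kummer_fps a c) = 0"
proof (rule fps_ext)
  fix n
  have rec: "(of_nat m + 1) * (of_nat m + c) * kummer_fps a c $ Suc m = (a + of_nat m) * kummer_fps a c $ m"
    for m
  proof -
    have "(of_nat m + 1 :: complex) \<noteq> 0" "of_nat m + c \<noteq> 0"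
      using assms[rule_format, of m] by (metis of_nat_Suc of_nat_neq_0 add.commute, simp add: add_eq_0_iff)
    then show ?thesis by (simp add: kummer_fps_nth_Suc)
  qed
  show "kummer_op c 1 0 a (kummer_fps a c) $ n = 0 $ n"
  proof (cases n)
    case 0
    with rec[of 0] show ?thesis by (simp add: kummer_op_nth_0)
  next
    case (Suc m)
    with rec[of "Suc m"] show ?thesis by (simp add: kummer_op_nth_Suc add_ac)
  qed
qed

definition exp_kummer_residual :: "complex \<Rightarrow> complex \<Rightarrow> complex \<Rightarrow> (nat \<Rightarrow> complex) \<Rightarrow> nat \<Rightarrow> complex" where
  "exp_kummer_residual a c q f m = (of_nat m + 2) * (of_nat m + 1 + c) * f (m + 2)
     - ((1 + 2 * q) * (of_nat m + 1) + (a + q * c)) * f (m + 1) + (q + q^2) * f m"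

lemma exp_kummer_residual_fps_exp_mult_kummer_fps:
  assumes "\<forall>k::nat. c \<noteq> - of_nat k"
  shows "exp_kummer_residual a c q (fps_nth (fps_exp q * kummer_fps a c)) m = 0"
proof -
  have "kummer_op c (1 + 2 * q) (0 + q * 1 + q^2) (a + q * c) (fps_exp q * kummer_fps a c) = 0"
    unfolding kummer_op_fps_exp_mult kummer_op_kummer_fps[OF assms] by simp
  then have "kummer_op c (1 + 2 * q) (0 + q * 1 + q^2) (a + q * c) (fps_exp q * kummer_fps a c) $ Suc m = 0"
    by simp
  then show ?thesis unfolding kummer_op_nth_Suc exp_kummer_residual_def by simp
qed

lemma DD_nonzero:
  assumes "\<forall>k::nat. c \<noteq> - of_nat k" and "c \<noteq> 2" and "n \<ge> 1"
  shows "DD c n \<noteq> 0"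
proof -
  have nz: "c + of_nat k \<noteq> 0" for k using assms(1) by (simp add: add_eq_0_iff2)
  have "c + of_nat n - 1 \<noteq> 0"
    using nz[of "n - 1"] assms(3) by (simp add: of_nat_diff algebra_simps)
  moreover have "(of_nat n :: complex) \<noteq> 0" using assms(3) by simp
  moreover have "(of_nat n + 1 :: complex) \<noteq> 0" by (metis of_nat_Suc of_nat_neq_0 add.commute)
  ultimately show ?thesis
    using nz[of 0] nz[of n] assms(2) unfolding DD_def Let_def by simp
qed

(*
  The multipliers are the certificate: after clearing the denominators of the betas and
  substituting p^2 = -q^2, both sides are the same polynomial in a, c, q, n and the values of f.
*)
lemma DD_mult_beta_residual_eq:
  fixes a c p q :: complex and f :: "nat \<Rightarrow> complex"
  assumes q: "q^2 = - (p^2)" and D: "DD c n \<noteq> 0" and n: "n \<ge> 5"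
  defines "N \<equiv> of_nat n :: complex" and "T \<equiv> exp_kummer_residual a c q f"
  shows "DD c n * (f (n+1) - (beta0 a c p n * f n + beta1 a c p n * f (n-1)
               + beta2 a c p n * f (n-2) + beta3 a c p n * f (n-3)
               + beta4 a c p n * f (n-4) + beta5 a c p n * f (n-5)))
     = (2*N*c - 3*N*c^2 + N*c^3 - 2*N^2*c + N^2*c^2) * T (n - 1)
  + (- 10*c + 4*c^2 - 2*c^2*q + c^3*q + 16*a - 4*a*c - a*c^2 + 10*N*c - 4*N*c*q - 3*N*c^2
     + 2*N*c^2*q - 16*N*a + 4*N*a*c - 2*N^2*c + 4*N^2*a) * T (n - 2)
  + (12 - 48*q^2 - 8*c + 10*c*q + 10*c*q^2 - 3*c^2*q + c^2*q^2 + 10*a - 16*a*q + 2*a*c + 4*a*c*q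
     - 4*a^2 - 7*N + 28*N*q^2 + 3*N*c - 4*N*c*q - 4*N*c*q^2 - 4*N*a + 8*N*a*q + N^2 - 4*N^2*q^2)
     * T (n - 3)
  + (4 - 8*q - 16*q^2 + 32*q^3 + 3*c*q - 2*c*q^2 - 4*c*q^3 - a - 4*a*q + 8*a*q^2 - N + 2*N*q
     + 4*N*q^2 - 8*N*q^3) * T (n - 4)
  + (- q + q^2 + 4*q^3 - 4*q^4) * T (n - 5)"
proof -
  obtain k where k: "n = k + 5" using n le_Suc_ex by (metis add.commute)
  define E where "E = (c - 2) * c * (N + 1) * (c + N)"
  have DD_split: "DD c n = E * (N * (c + N - 1))"
    unfolding DD_def Let_def E_def N_def by (simp only: mult_ac)
  have cancel_DD: "DD c n * (x / DD c n) = x" for x using D by simp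
  have cancel_E: "E * M * (x / E) = M * x" for M x using D DD_split by simp
  have distrib: "DD c n * (f (n+1) - (beta0 a c p n * f n + beta1 a c p n * f (n-1)
               + beta2 a c p n * f (n-2) + beta3 a c p n * f (n-3)
               + beta4 a c p n * f (n-4) + beta5 a c p n * f (n-5)))
      = DD c n * f (n+1) - (DD c n * beta0 a c p n * f n + DD c n * beta1 a c p n * f (n-1)
               + DD c n * beta2 a c p n * f (n-2) + DD c n * beta3 a c p n * f (n-3)
               + DD c n * beta4 a c p n * f (n-4) + DD c n * beta5 a c p n * f (n-5))"
    by algebra
  have idx: "n + 1 = k + 6" "n - 1 = k + 4" "n - 2 = k + 3" "n - 3 = k + 2" "n - 4 = k + 1" "n - 5 = k + 0"
    using k by simp_all
  have T: "T (k + i) = (of_nat k + of_nat i + 2) * (of_nat k + of_nat i + 1 + c) * f (k + (i + 2))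
      - ((1 + 2*q) * (of_nat k + of_nat i + 1) + (a + q*c)) * f (k + (i + 1)) + (q + q^2) * f (k + i)"
    for i
    by (simp add: T_def exp_kummer_residual_def add.assoc)
  have p: "p^4 = (p^2)^2" "p^2 = - (q^2)" using q by simp_all
  show ?thesis
    unfolding distrib
    apply (simp only: beta1_def beta2_def beta3_def beta4_def beta5_def Let_def cancel_DD)
    apply (simp only: DD_split beta0_def Let_def N_def[symmetric] E_def[symmetric] cancel_E)
    apply (simp only: idx T)
    apply (simp only: E_def N_def k p of_nat_add of_nat_numeral of_nat_0 of_nat_1 add_0_right add_0
        numeral_plus_numeral add_num_simps numeral_plus_one one_plus_numeral one_add_one)
    apply algebra
    done
qed

lemma beta_recurrence_if_exp_kummer_residual_zero:
  fixes f :: "nat \<Rightarrow> complex"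
  assumes "q^2 = - (p^2)" and D: "DD c n \<noteq> 0" and "n \<ge> 5"
    and "\<And>m. exp_kummer_residual a c q f m = 0"
  shows "f (n+1) = beta0 a c p n * f n + beta1 a c p n * f (n-1)
               + beta2 a c p n * f (n-2) + beta3 a c p n * f (n-3)
               + beta4 a c p n * f (n-4) + beta5 a c p n * f (n-5)"
proof -
  have "DD c n * (f (n+1) - (beta0 a c p n * f n + beta1 a c p n * f (n-1)
               + beta2 a c p n * f (n-2) + beta3 a c p n * f (n-3)
               + beta4 a c p n * f (n-4) + beta5 a c p n * f (n-5))) = 0"
    unfolding DD_mult_beta_residual_eq[OF assms(1-3)] using assms(4) by simp
  then show ?thesis using D by simp
qed

lemma fps_sin_mult_kummer_fps_recurrence:
  fixes a c p :: complex
  assumes c: "\<forall>k::nat. c \<noteq> - of_nat k" and c2: "c \<noteq> 2" and n: "n \<ge> 5"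
  defines "S \<equiv> fps_sin p * kummer_fps a c"
  shows "S $ (n+1) = beta0 a c p n * S $ n + beta1 a c p n * S $ (n-1)
               + beta2 a c p n * S $ (n-2) + beta3 a c p n * S $ (n-3)
               + beta4 a c p n * S $ (n-4) + beta5 a c p n * S $ (n-5)"
proof -
  define F where "F q = fps_exp q * kummer_fps a c" for q
  have "S = fps_const (inverse (2 * \<i>)) * (F (\<i> * p) - F (- \<i> * p))"
    unfolding S_def F_def fps_sin_fps_exp_ii by (simp add: algebra_simps)
  then have S: "S $ m = inverse (2 * \<i>) * (F (\<i> * p) $ m - F (- \<i> * p) $ m)" for m
    by simp
  have D: "DD c n \<noteq> 0" using n by (intro DD_nonzero[OF c c2]) simp
  have rec: "F q $ (n+1) = beta0 a c p n * F q $ n + beta1 a c p n * F q $ (n-1)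
               + beta2 a c p n * F q $ (n-2) + beta3 a c p n * F q $ (n-3)
               + beta4 a c p n * F q $ (n-4) + beta5 a c p n * F q $ (n-5)" if "q^2 = - (p^2)" for q
    unfolding F_def
    by (rule beta_recurrence_if_exp_kummer_residual_zero[OF that D n
          exp_kummer_residual_fps_exp_mult_kummer_fps[OF c]])
  have "(\<i> * p)^2 = - (p^2)" "(- \<i> * p)^2 = - (p^2)" by (simp_all add: power_mult_distrib)
  from this[THEN rec] show ?thesis
    unfolding S by algebra
qed

lemma fps_mult_nth_le5:
  fixes f g :: "'a::comm_ring_1 fps"
  shows "(f * g) $ 0 = f$0 * g$0"
    "(f * g) $ 1 = f$0 * g$1 + f$1 * g$0"
    "(f * g) $ 2 = f$0 * g$2 + f$1 * g$1 + f$2 * g$0"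
    "(f * g) $ 3 = f$0 * g$3 + f$1 * g$2 + f$2 * g$1 + f$3 * g$0"
    "(f * g) $ 4 = f$0 * g$4 + f$1 * g$3 + f$2 * g$2 + f$3 * g$1 + f$4 * g$0"
    "(f * g) $ 5 = f$0 * g$5 + f$1 * g$4 + f$2 * g$3 + f$3 * g$2 + f$4 * g$1 + f$5 * g$0"
  by (simp_all add: fps_mult_nth atLeast0AtMost eval_nat_numeral)

lemma fps_sin_nth_le5:
  fixes p :: "'a :: field_char_0"
  shows "fps_sin p $ 0 = 0" "fps_sin p $ 1 = p" "fps_sin p $ 2 = 0" "fps_sin p $ 3 = - (p^3) / 6"
    "fps_sin p $ 4 = 0" "fps_sin p $ 5 = p^5 / 120"
  by (simp_all add: fps_sin_def fact_numeral)

lemma kummer_fps_nth_le4: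
  "kummer_fps a c $ 0 = 1" "kummer_fps a c $ 1 = a / c" "kummer_fps a c $ 2 = a*(a+1) / (2*c*(c+1))"
  "kummer_fps a c $ 3 = a*(a+1)*(a+2) / (6*c*(c+1)*(c+2))"
  "kummer_fps a c $ 4 = a*(a+1)*(a+2)*(a+3) / (24*c*(c+1)*(c+2)*(c+3))"
  by (simp_all add: kummer_fps_def eval_nat_numeral pochhammer_Suc fact_Suc field_simps)

lemma fps_sin_mult_kummer_fps_nth_le5:
  fixes a c p :: complex
  assumes "c \<noteq> 0" "c + 1 \<noteq> 0" "c + 2 \<noteq> 0" "c + 3 \<noteq> 0"
  shows "(fps_sin p * kummer_fps a c) $ 0 = 0"  "(fps_sin p * kummer_fps a c) $ 1 = p"
    "(fps_sin p * kummer_fps a c) $ 2 = a * p / c"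
    "(fps_sin p * kummer_fps a c) $ 3 = a*(a+1)*p / (2*c*(c+1)) - p^3 / 6"
    "(fps_sin p * kummer_fps a c) $ 4 = a*(a+1)*(a+2)*p / (6*c*(c+1)*(c+2)) - a*p^3 / (6*c)"
    "(fps_sin p * kummer_fps a c) $ 5 = - a*(a+1)*p^3 / (12*c*(c+1))
               + a*(a+1)*(a+2)*(a+3)*p / (24*c*(c+1)*(c+2)*(c+3)) + p^5 / 120"
  unfolding fps_mult_nth_le5 fps_sin_nth_le5 kummer_fps_nth_le4 using assms
  by (simp_all add: field_simps) (simp add: add_divide_distrib[symmetric])

theorem theorem2p7:
  fixes a c p :: complex and u :: "nat \<Rightarrow> complex"
  assumes c_ok: "\<forall>k::nat. c \<noteq> - of_nat k"
    and c_ne2: "c \<noteq> 2"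
    and u_def: "\<forall>z::complex. (\<lambda>n. u n * z ^ n) sums (sin (p * z) * kummerM a c z)"
  shows "u 0 = 0
    \<and> u 1 = p
    \<and> u 2 = a * p / c
    \<and> u 3 = a*(a+1)*p / (2*c*(c+1)) - p^3 / 6
    \<and> u 4 = a*(a+1)*(a+2)*p / (6*c*(c+1)*(c+2)) - a*p^3 / (6*c)
    \<and> u 5 = - a*(a+1)*p^3 / (12*c*(c+1))
               + a*(a+1)*(a+2)*(a+3)*p / (24*c*(c+1)*(c+2)*(c+3)) + p^5 / 120
    \<and> (\<forall>n\<ge>5. u (n+1) = beta0 a c p n * u n + beta1 a c p n * u (n-1)
               + beta2 a c p n * u (n-2) + beta3 a c p n * u (n-3)
               + beta4 a c p n * u (n-4) + beta5 a c p n * u (n-5))"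
proof -
  have "Abs_fps u = fps_sin p * kummer_fps a c"
  proof (rule Abs_fps_eq_if_sums_eval_fps)
    show "fps_conv_radius (fps_sin p * kummer_fps a c) > 0"
      using fps_conv_radius_mult[of "fps_sin p" "kummer_fps a c"] by simp
    show "(\<lambda>n. u n * z ^ n) sums eval_fps (fps_sin p * kummer_fps a c) z" for z
      using u_def by (simp add: eval_fps_mult)
  qed
  then have u: "u n = (fps_sin p * kummer_fps a c) $ n" for n by (metis fps_nth_Abs_fps)
  have "c + of_nat k \<noteq> 0" for k using c_ok by (simp add: add_eq_0_iff2)
  from this[of 0] this[of 1] this[of 2] this[of 3] show ?thesis
    unfolding u
    using fps_sin_mult_kummer_fps_nth_le5 fps_sin_mult_kummer_fps_recurrence[OF c_ok c_ne2]
    by simp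
qed

end
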